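(* For every positive integer $r$ there exists a Heffter space with exactly $r$ parallel classes.
   Context: A half-set of an abelian group $G$ of odd order $2v+1\ge7$ is a subset $V\subseteq G\setminus\{0\}$ containing exactly one element of each pair $\{g,-g\}$, $g\ne0$. A Heffter system on $V$ with block size $k$ is a partition of $V$ into blocks of size $k$, each summing to $0$ in $G$. A Heffter space over $G$ is a partial linear space (any two distinct points lie in at most one block) with point set a half-set $V$ of $G$, together with a resolution of its blocks into parallel classes (each a partition of $V$), every parallel class being a Heffter system on $V$; its degree is the number of parallel classes. *)

theory Defs
  imports "HOL-Algebra.Algebra"
begin

text \<open>Abelian groups are HOL-Algebra commutative groups; the group operation
  (written multiplicatively in the library) plays the role of addition,
  the unit the role of 0 and inv the role of negation.\<close>

definition half_set :: "('a, 'b) monoid_scheme \<Rightarrow> 'a set \<Rightarrow> bool" where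
  "half_set G V \<longleftrightarrow> V \<subseteq> carrier G - {\<one>\<^bsub>G\<^esub>} \<and>
     (\<forall>g \<in> carrier G - {\<one>\<^bsub>G\<^esub>}. (g \<in> V \<longleftrightarrow> inv\<^bsub>G\<^esub> g \<notin> V))"

definition heffter_system :: "('a, 'b) monoid_scheme \<Rightarrow> 'a set \<Rightarrow> nat \<Rightarrow> 'a set set \<Rightarrow> bool" where
  "heffter_system G V k P \<longleftrightarrow>
     \<Union>P = V \<and>
     (\<forall>B \<in> P. \<forall>B' \<in> P. B \<noteq> B' \<longrightarrow> B \<inter> B' = {}) \<and>
     (\<forall>B \<in> P. card B = k \<and> finprod G id B = \<one>\<^bsub>G\<^esub>)"

text \<open>A Heffter space over G with point set V, block size k and degree r:
  parallel classes P 0, ..., P (r-1), each a Heffter system on V, such that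
  the blocks (counted with their class) form a partial linear space: two
  distinct blocks share at most one point.\<close>
definition heffter_space :: "('a, 'b) monoid_scheme \<Rightarrow> 'a set \<Rightarrow> nat \<Rightarrow> nat \<Rightarrow> (nat \<Rightarrow> 'a set set) \<Rightarrow> bool" where
  "heffter_space G V k r P \<longleftrightarrow>
     half_set G V \<and>
     (\<forall>i < r. heffter_system G V k (P i)) \<and>
     (\<forall>i < r. \<forall>j < r. \<forall>B \<in> P i. \<forall>B' \<in> P j.
        (i, B) \<noteq> (j, B') \<longrightarrow> card (B \<inter> B') \<le> 1)"

end

theory Submission
  imports Defs
begin

text \<open>
  Put \<open>q = 8r + 1\<close> and \<open>G = \<int>/q \<times> \<int>/25\<close>. The \<open>3 \<times> 4\<close> array \<open>harr\<close> is a Heffter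
  array over \<open>\<int>/25\<close>: its rows and columns sum to 0 and its twelve entries form a half-set
  \<open>Y\<close> of \<open>\<int>/25\<close>. With a half-set \<open>X = zero_half r\<close> of \<open>\<int>/q\<close> of size \<open>4r\<close>, the set
  \<open>V = (\<int>/q \<times> Y) \<union> (X \<times> {0})\<close> is a half-set of \<open>G\<close>. Each row of the array is inflated
  to \<open>7r + 1\<close> blocks and each column, completed by a point of \<open>X \<times> {0}\<close>, to \<open>r\<close> blocks:
  in slot \<open>i\<close> the first coordinate is \<open>c\<^sub>i + s\<^sub>i h + l w\<^sub>i\<close> (\<open>base_shift\<close>, \<open>base_sign\<close>
  \<open>= \<plusminus>1\<close>, \<open>base_shear\<close>), where \<open>h\<close> is the block parameter and \<open>l\<close> the index of the
  parallel class. For every \<open>l\<close> these zero-sum blocks partition \<open>V\<close>. If blocks of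
  classes \<open>l \<noteq> l'\<close> shared two points, they would come from the same line of the array
  (distinct lines share at most one entry), and then
  \<open>q\<close> would divide \<open>(l - l') (s\<^sub>i w\<^sub>i - s\<^sub>j w\<^sub>j)\<close>, a nonzero number of absolute value at
  most \<open>6 |l - l'| < q\<close>.
\<close>

section \<open>The group \<open>\<int>/q \<times> \<int>/m\<close>\<close>

text \<open>The pair \<open>(x, y) \<in> \<int>/q \<times> \<int>/m\<close> is represented by the integer \<open>x + q y\<close> with
  \<open>0 \<le> x < q\<close> and \<open>0 \<le> y < m\<close>.\<close>

definition zpair :: "int \<Rightarrow> int \<Rightarrow> int \<Rightarrow> int \<Rightarrow> int" where
  "zpair q m x y = x mod q + q * (y mod m)"

definition zprod :: "int \<Rightarrow> int \<Rightarrow> int monoid" where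
  "zprod q m = \<lparr>carrier = {0..<q * m},
     monoid.mult = (\<lambda>u v. zpair q m (u mod q + v mod q) (u div q + v div q)), monoid.one = 0\<rparr>"

lemma zprod_carrier [simp]: "carrier (zprod q m) = {0..<q * m}"
  and zprod_one [simp]: "\<one>\<^bsub>zprod q m\<^esub> = 0"
  and zprod_mult: "u \<otimes>\<^bsub>zprod q m\<^esub> v = zpair q m (u mod q + v mod q) (u div q + v div q)"
  by (simp_all add: zprod_def)

lemma zpair_cong: "x mod q = x' mod q \<Longrightarrow> y mod m = y' mod m \<Longrightarrow> zpair q m x y = zpair q m x' y'"
  by (simp add: zpair_def)

lemma zpair_zero: "zpair q m 0 0 = 0"
  by (simp add: zpair_def)

context
  fixes q m :: int
  assumes q: "q > 0" and m: "m > 0"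
begin

lemma zpair_mod [simp]: "zpair q m x y mod q = x mod q"
  using q by (simp add: zpair_def)

lemma zpair_div [simp]: "zpair q m x y div q = y mod m"
  using q by (simp add: zpair_def div_add1_eq)

lemma zpair_nonneg [simp]: "0 \<le> zpair q m x y"
  using q m by (simp add: zpair_def)

lemma zpair_less [simp]: "zpair q m x y < q * m"
proof -
  have "y mod m \<le> m - 1"
    using m by (simp add: pos_mod_bound[THEN zless_imp_add1_zle])
  then have "q * (y mod m) \<le> q * (m - 1)"
    using q by (simp add: mult_left_mono)
  moreover have "x mod q < q"
    using q by simp
  ultimately show ?thesis
    by (simp add: zpair_def right_diff_distrib)
qed

lemma div_in_range:
  assumes u: "u \<in> {0..<q * m}"
  shows "u div q \<in> {0..<m}"
proof -
  have "u div q * q + u mod q = u"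
    by (rule div_mult_mod_eq)
  moreover have "0 \<le> u mod q"
    using q by simp
  moreover have "u < m * q"
    using u by (simp add: mult.commute)
  ultimately have "u div q * q < m * q"
    by linarith
  then show ?thesis
    using q u by (simp add: pos_imp_zdiv_nonneg_iff)
qed

lemma zpair_mod_div: "u \<in> {0..<q * m} \<Longrightarrow> zpair q m (u mod q) (u div q) = u"
  using div_in_range[of u] by (simp add: zpair_def)

lemma zpair_add: "zpair q m x y \<otimes>\<^bsub>zprod q m\<^esub> zpair q m x' y' = zpair q m (x + x') (y + y')"
  unfolding zprod_mult by (rule zpair_cong) (simp_all add: mod_add_eq)

lemma zprod_comm_group: "comm_group (zprod q m)"
proof (rule comm_groupI)
  fix u v w
  assume "u \<in> carrier (zprod q m)" "v \<in> carrier (zprod q m)" "w \<in> carrier (zprod q m)"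
  then have uvw: "zpair q m (u mod q) (u div q) = u" "zpair q m (v mod q) (v div q) = v"
    "zpair q m (w mod q) (w div q) = w"
    by (simp_all add: zpair_mod_div)
  have assoc: "zpair q m x y \<otimes>\<^bsub>zprod q m\<^esub> zpair q m x' y' \<otimes>\<^bsub>zprod q m\<^esub> zpair q m x'' y''
    = zpair q m x y \<otimes>\<^bsub>zprod q m\<^esub> (zpair q m x' y' \<otimes>\<^bsub>zprod q m\<^esub> zpair q m x'' y'')" for x y x' y' x'' y''
    by (simp add: zpair_add add.assoc)
  show "u \<otimes>\<^bsub>zprod q m\<^esub> v \<otimes>\<^bsub>zprod q m\<^esub> w = u \<otimes>\<^bsub>zprod q m\<^esub> (v \<otimes>\<^bsub>zprod q m\<^esub> w)"
    using assoc[of "u mod q" "u div q" "v mod q" "v div q" "w mod q" "w div q"] by (simp only: uvw)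
next
  fix u v
  assume "u \<in> carrier (zprod q m)" "v \<in> carrier (zprod q m)"
  then have uv: "zpair q m (u mod q) (u div q) = u" "zpair q m (v mod q) (v div q) = v"
    by (simp_all add: zpair_mod_div)
  have comm: "zpair q m x y \<otimes>\<^bsub>zprod q m\<^esub> zpair q m x' y' = zpair q m x' y' \<otimes>\<^bsub>zprod q m\<^esub> zpair q m x y"
    for x y x' y'
    by (simp add: zpair_add add.commute)
  show "u \<otimes>\<^bsub>zprod q m\<^esub> v = v \<otimes>\<^bsub>zprod q m\<^esub> u"
    using comm[of "u mod q" "u div q" "v mod q" "v div q"] by (simp only: uv)
next
  fix u
  assume u: "u \<in> carrier (zprod q m)"
  then show "\<one>\<^bsub>zprod q m\<^esub> \<otimes>\<^bsub>zprod q m\<^esub> u = u"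
    using zpair_add[of 0 0 "u mod q" "u div q"] by (simp add: zpair_mod_div zpair_zero)
  show "\<exists>v\<in>carrier (zprod q m). v \<otimes>\<^bsub>zprod q m\<^esub> u = \<one>\<^bsub>zprod q m\<^esub>"
  proof
    show "zpair q m (- (u mod q)) (- (u div q)) \<otimes>\<^bsub>zprod q m\<^esub> u = \<one>\<^bsub>zprod q m\<^esub>"
      using u zpair_add[of "- (u mod q)" "- (u div q)" "u mod q" "u div q"]
      by (simp add: zpair_mod_div zpair_zero)
  qed simp
qed (use q m in \<open>simp_all add: zprod_mult\<close>)

lemma zprod_inv:
  assumes u: "u \<in> {0..<q * m}"
  shows "inv\<^bsub>zprod q m\<^esub> u = zpair q m (- (u mod q)) (- (u div q))"
proof -
  interpret comm_group "zprod q m" by (rule zprod_comm_group)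
  have "zpair q m (- (u mod q)) (- (u div q)) \<otimes>\<^bsub>zprod q m\<^esub> u = \<one>\<^bsub>zprod q m\<^esub>"
    using u zpair_add[of "- (u mod q)" "- (u div q)" "u mod q" "u div q"]
    by (simp add: zpair_mod_div zpair_zero)
  then show ?thesis
    using u by (intro inv_equality) simp_all
qed

lemma zprod_finprod:
  "finite A \<Longrightarrow> A \<subseteq> {0..<q * m} \<Longrightarrow>
     finprod (zprod q m) id A = zpair q m (\<Sum>u\<in>A. u mod q) (\<Sum>u\<in>A. u div q)"
proof (induction A rule: finite_induct)
  case empty
  interpret comm_group "zprod q m" by (rule zprod_comm_group)
  show ?case
    using zpair_zero by simp
next
  case (insert u A)
  interpret comm_group "zprod q m" by (rule zprod_comm_group)
  have "finprod (zprod q m) id (insert u A) = u \<otimes>\<^bsub>zprod q m\<^esub> finprod (zprod q m) id A"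
    using insert by (simp add: finprod_insert subset_iff)
  also have "\<dots> = zpair q m (u mod q) (u div q) \<otimes>\<^bsub>zprod q m\<^esub>
      zpair q m (\<Sum>v\<in>A. v mod q) (\<Sum>v\<in>A. v div q)"
    using insert by (simp add: zpair_mod_div id_def)
  also have "\<dots> = zpair q m (u mod q + (\<Sum>v\<in>A. v mod q)) (u div q + (\<Sum>v\<in>A. v div q))"
    by (rule zpair_add)
  finally show ?case
    using insert.hyps by (simp add: id_def)
qed

end

lemma neg_mod_eq:
  fixes x n :: int
  assumes "x \<in> {1..<n}"
  shows "(- x) mod n = n - x"
proof -
  have "(n - x) mod n = n - x"
    using assms by (intro mod_pos_pos_trivial) auto
  then show ?thesis
    by (simp only: minus_mod_self1)
qed

lemma mod_shift_offset:
  fixes c d x q :: int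
  shows "(c + (x - c - d) mod q + d) mod q = x mod q"
proof -
  have "(c + (x - c - d) mod q + d) mod q = (c + (x - c - d) + d) mod q"
    by (metis mod_add_left_eq mod_add_right_eq)
  then show ?thesis
    by simp
qed

lemma shear_collision:
  fixes q d L s1 s2 w1 w2 :: int
  assumes "s1 * s1 = 1" "s2 * s2 = 1" "q dvd s1 * d + L * w1" "q dvd s2 * d + L * w2"
  shows "q dvd L * (s1 * w1 - s2 * w2)"
proof -
  have "s1 * (s1 * d + L * w1) = d + L * (s1 * w1)" "s2 * (s2 * d + L * w2) = d + L * (s2 * w2)"
    using assms(1,2) by (simp_all add: algebra_simps)
  moreover have "q dvd s1 * (s1 * d + L * w1) - s2 * (s2 * d + L * w2)"
    using assms(3,4) by (intro dvd_diff dvd_mult)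
  ultimately show ?thesis
    by (simp add: right_diff_distrib)
qed

section \<open>Half-sets of \<open>\<int>/q \<times> \<int>/m\<close>\<close>

definition mod_half_set :: "int \<Rightarrow> int set \<Rightarrow> bool" where
  "mod_half_set n A \<longleftrightarrow> A \<subseteq> {1..<n} \<and> (\<forall>x\<in>{1..<n}. x \<in> A \<longleftrightarrow> n - x \<notin> A)"

definition zprod_half :: "int \<Rightarrow> int \<Rightarrow> int set \<Rightarrow> int set \<Rightarrow> int set" where
  "zprod_half q m A B = {u \<in> {0..<q * m}. u div q \<in> B \<or> (u div q = 0 \<and> u mod q \<in> A)}"

lemma mod_half_set_iff: "mod_half_set n A \<Longrightarrow> x \<in> {1..<n} \<Longrightarrow> x \<in> A \<longleftrightarrow> n - x \<notin> A"
  unfolding mod_half_set_def by blast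

lemma zero_notin_mod_half_set:
  assumes "mod_half_set n A"
  shows "0 \<notin> A"
proof
  assume "0 \<in> A"
  then have "0 \<in> {1..<n}"
    using assms unfolding mod_half_set_def by blast
  then show False
    by simp
qed

lemma zpair_in_zprod_half:
  assumes "q > 0" "m > 0"
  shows "zpair q m x y \<in> zprod_half q m A B \<longleftrightarrow> y mod m \<in> B \<or> (y mod m = 0 \<and> x mod q \<in> A)"
  using assms by (simp add: zprod_half_def)

lemma inv_in_zprod_half:
  assumes "q > 0" "m > 0" "u \<in> {0..<q * m}"
  shows "inv\<^bsub>zprod q m\<^esub> u \<in> zprod_half q m A B \<longleftrightarrow>
    (- (u div q)) mod m \<in> B \<or> ((- (u div q)) mod m = 0 \<and> (- (u mod q)) mod q \<in> A)"
  using assms by (simp add: zprod_inv zpair_in_zprod_half)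

lemma half_set_zprod_half:
  assumes q: "q > 0" and m: "m > 0" and A: "mod_half_set q A" and B: "mod_half_set m B"
  shows "half_set (zprod q m) (zprod_half q m A B)"
  unfolding half_set_def
proof (intro conjI ballI)
  show "zprod_half q m A B \<subseteq> carrier (zprod q m) - {\<one>\<^bsub>zprod q m\<^esub>}"
    using zero_notin_mod_half_set[OF A] zero_notin_mod_half_set[OF B] by (force simp: zprod_half_def)
  fix u
  assume "u \<in> carrier (zprod q m) - {\<one>\<^bsub>zprod q m\<^esub>}"
  then have u: "u \<in> {0..<q * m}" "u \<noteq> 0"
    by simp_all
  define x y where "x = u mod q" and "y = u div q"
  have x: "x \<in> {0..<q}" and y: "y \<in> {0..<m}"
    using q div_in_range[OF q m u(1)] by (simp_all add: x_def y_def)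
  have u_in: "u \<in> zprod_half q m A B \<longleftrightarrow> y \<in> B \<or> (y = 0 \<and> x \<in> A)"
    using u(1) by (simp add: zprod_half_def x_def y_def)
  have inv_in: "inv\<^bsub>zprod q m\<^esub> u \<in> zprod_half q m A B \<longleftrightarrow>
      (- y) mod m \<in> B \<or> ((- y) mod m = 0 \<and> (- x) mod q \<in> A)"
    using inv_in_zprod_half[OF q m u(1)] by (simp add: x_def y_def)
  show "u \<in> zprod_half q m A B \<longleftrightarrow> inv\<^bsub>zprod q m\<^esub> u \<notin> zprod_half q m A B"
  proof (cases "y = 0")
    case True
    then have x_range: "x \<in> {1..<q}"
      using u x zpair_mod_div[OF q m u(1)] by (simp add: x_def y_def zpair_def)
    moreover note zero_notin_mod_half_set[OF B]
    ultimately have "u \<in> zprod_half q m A B \<longleftrightarrow> x \<in> A"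
      "inv\<^bsub>zprod q m\<^esub> u \<in> zprod_half q m A B \<longleftrightarrow> q - x \<in> A"
      using True u_in inv_in neg_mod_eq[OF x_range] by simp_all
    then show ?thesis
      using mod_half_set_iff[OF A x_range] by blast
  next
    case False
    then have y_range: "y \<in> {1..<m}"
      using y by simp
    then have "u \<in> zprod_half q m A B \<longleftrightarrow> y \<in> B"
      "inv\<^bsub>zprod q m\<^esub> u \<in> zprod_half q m A B \<longleftrightarrow> m - y \<in> B"
      using False u_in inv_in neg_mod_eq[OF y_range] by simp_all
    then show ?thesis
      using mod_half_set_iff[OF B y_range] by blast
  qed
qed

section \<open>A Heffter array over \<open>\<int>/25\<close> and the base blocks\<close>

lemma less_3_cases: "j < (3::nat) \<longleftrightarrow> j = 0 \<or> j = 1 \<or> j = 2"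
  by auto

lemma less_4_cases: "j < (4::nat) \<longleftrightarrow> j = 0 \<or> j = 1 \<or> j = 2 \<or> j = 3"
  by auto

lemma lessThan_4_eq: "{..<4::nat} = {0, 1, 2, 3}"
  by auto

lemma less_7_cases: "j < (7::nat) \<longleftrightarrow> j = 0 \<or> j = 1 \<or> j = 2 \<or> j = 3 \<or> j = 4 \<or> j = 5 \<or> j = 6"
  by auto

definition harr :: "nat \<Rightarrow> nat \<Rightarrow> int" where
  "harr j t = [[2, 21, 9, 18], [11, 5, 19, 15], [12, 24, 22, 17]] ! j ! t"

definition harr_entries :: "int set" where
  "harr_entries = {2, 21, 9, 18, 11, 5, 19, 15, 12, 24, 22, 17}"

definition harr_row :: "int \<Rightarrow> nat" where
  "harr_row y = (if y \<in> {2, 21, 9, 18} then 0 else if y \<in> {11, 5, 19, 15} then 1 else 2)"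

definition harr_col :: "int \<Rightarrow> nat" where
  "harr_col y = (if y \<in> {2, 11, 12} then 0 else if y \<in> {21, 5, 24} then 1
     else if y \<in> {9, 19, 22} then 2 else 3)"

lemma harr_lookup:
  assumes "j < 3" "t < 4"
  shows "harr_row (harr j t) = j \<and> harr_col (harr j t) = t \<and> harr j t \<in> harr_entries"
  using assms unfolding less_3_cases less_4_cases
  by (elim disjE) (simp_all add: harr_def harr_row_def harr_col_def harr_entries_def)

lemma zero_notin_harr_entries: "0 \<notin> harr_entries"
  by (simp add: harr_entries_def)

lemma harr_entries_lookup:
  assumes "y \<in> harr_entries"
  shows "harr_row y < 3 \<and> harr_col y < 4 \<and> harr (harr_row y) (harr_col y) = y"
  using assms unfolding harr_entries_def
  by (elim insertE emptyE) (simp_all add: harr_def harr_row_def harr_col_def)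

lemma mod_half_set_harr_entries: "mod_half_set 25 harr_entries"
  unfolding mod_half_set_def
proof (intro conjI ballI)
  show "harr_entries \<subseteq> {1..<25}"
    by (simp add: harr_entries_def)
  fix y :: int
  assume "y \<in> {1..<25}"
  then have "y \<in> {1, 2, 3, 4, 5, 6, 7, 8, 9, 10, 11, 12, 13, 14, 15, 16, 17, 18, 19, 20, 21, 22, 23, 24}"
    by (simp; presburger)
  then show "y \<in> harr_entries \<longleftrightarrow> 25 - y \<notin> harr_entries"
    unfolding harr_entries_def by (elim insertE emptyE) simp_all
qed

definition modulus :: "int \<Rightarrow> int" where
  "modulus a = 8 * a + 1"

definition shear :: "nat \<Rightarrow> nat \<Rightarrow> int" where
  "shear j t = [[-3, 3, -1, 1], [1, -1, 2, -2], [2, -2, -1, 1]] ! j ! t"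

definition cell_shift :: "int \<Rightarrow> nat \<Rightarrow> nat \<Rightarrow> int" where
  "cell_shift a j t =
     (if j < 2 then (if t = 0 then 2 - 2 * a else 0) else [a - 3, 1 - 4 * a, 1 - 6 * a, 1 - 9 * a] ! t)"

definition zero_shift :: "int \<Rightarrow> nat \<Rightarrow> int" where
  "zero_shift a t = [a + 1, 2 * a + 1, 4 * a + 1, 7 * a + 1] ! t"

text \<open>Base blocks \<open>b < 3\<close> follow row \<open>b\<close> of the array; base block \<open>3 + t\<close> follows
  column \<open>t\<close> and has a fourth slot in \<open>\<int>/q \<times> {0}\<close>.\<close>

definition base_y :: "nat \<Rightarrow> nat \<Rightarrow> int" where
  "base_y b i = (if b < 3 then harr b i else if i < 3 then harr i (b - 3) else 0)"

definition base_sign :: "nat \<Rightarrow> nat \<Rightarrow> int" where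
  "base_sign b i = (if b < 3 then (if i < 2 then 1 else -1) else if i < 2 then -1 else 1)"

definition base_shear :: "nat \<Rightarrow> nat \<Rightarrow> int" where
  "base_shear b i = (if b < 3 then shear b i else if i < 3 then shear i (b - 3) else 0)"

definition base_shift :: "int \<Rightarrow> nat \<Rightarrow> nat \<Rightarrow> int" where
  "base_shift a b i =
     (if b < 3 then cell_shift a b i + (if i < 2 then a else 8 * a)
      else if i < 3 then cell_shift a i (b - 3) + (if i < 2 then a - 1 else 0)
      else zero_shift a (b - 3))"

lemma base_y_row: "b < 3 \<Longrightarrow> base_y b i = harr b i"
  and base_y_col: "\<not> b < 3 \<Longrightarrow> i < 3 \<Longrightarrow> base_y b i = harr i (b - 3)"
  and base_y_zero: "\<not> b < 3 \<Longrightarrow> \<not> i < 3 \<Longrightarrow> base_y b i = 0"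
  by (simp_all add: base_y_def)

lemma base_y_range: "b < 7 \<Longrightarrow> i < 4 \<Longrightarrow> base_y b i \<in> {0..<25}"
  unfolding less_7_cases less_4_cases by (elim disjE) (simp_all add: base_y_def harr_def)

lemma base_shift_sum: "b < 7 \<Longrightarrow> (\<Sum>i<4. base_shift a b i) = (if b < 2 then 2 * modulus a else 0)"
  unfolding less_7_cases
  by (elim disjE) (simp_all add: eval_nat_numeral base_shift_def cell_shift_def zero_shift_def modulus_def)

lemma base_sign_sum: "b < 7 \<Longrightarrow> (\<Sum>i<4. base_sign b i) = 0"
  unfolding less_7_cases by (elim disjE) (simp_all add: eval_nat_numeral base_sign_def)

lemma base_shear_sum: "b < 7 \<Longrightarrow> (\<Sum>i<4. base_shear b i) = 0"
  unfolding less_7_cases by (elim disjE) (simp_all add: eval_nat_numeral base_shear_def shear_def)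

lemma base_y_sum: "b < 7 \<Longrightarrow> (\<Sum>i<4. base_y b i) mod 25 = 0"
  unfolding less_7_cases by (elim disjE) (simp_all add: eval_nat_numeral base_y_def harr_def)

lemma base_sign_square: "base_sign b i * base_sign b i = 1"
  by (simp add: base_sign_def)

lemma base_slope_bound: "b < 7 \<Longrightarrow> i < 4 \<Longrightarrow> \<bar>base_sign b i * base_shear b i\<bar> \<le> 3"
  unfolding less_7_cases less_4_cases
  by (elim disjE) (simp_all add: base_sign_def base_shear_def shear_def)

lemma base_slope_distinct:
  "b < 7 \<Longrightarrow> i < 4 \<Longrightarrow> i' < 4 \<Longrightarrow> i \<noteq> i' \<Longrightarrow>
     base_sign b i * base_shear b i \<noteq> base_sign b i' * base_shear b i'"
  unfolding less_7_cases less_4_cases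
  by (elim disjE) (simp_all add: base_sign_def base_shear_def shear_def)

lemma inj_on_base_y: "b < 7 \<Longrightarrow> inj_on (base_y b) {..<4}"
  unfolding less_7_cases
  by (elim disjE) (simp_all add: lessThan_4_eq base_y_def harr_def)

lemma card_base_y_overlap:
  "b < 7 \<Longrightarrow> b' < 7 \<Longrightarrow> b \<noteq> b' \<Longrightarrow> card (base_y b ` {..<4} \<inter> base_y b' ` {..<4}) \<le> 1"
  unfolding less_7_cases
  by (elim disjE) (simp_all add: lessThan_4_eq base_y_def harr_def)

lemma base_y_crossing:
  assumes "b < 7" "b' < 7" "i1 < 4" "i2 < 4" "i1' < 4" "i2' < 4" "i1 \<noteq> i2"
    and "base_y b i1 = base_y b' i1'" "base_y b i2 = base_y b' i2'"
  shows "b = b' \<and> i1 = i1' \<and> i2 = i2'"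
proof -
  have distinct: "base_y b i1 \<noteq> base_y b i2"
    using inj_on_eq_iff[OF inj_on_base_y[OF assms(1)]] assms(3,4,7) by simp
  have "b = b'"
  proof (rule ccontr)
    assume "b \<noteq> b'"
    have "base_y b i1 \<in> base_y b ` {..<4} \<inter> base_y b' ` {..<4}"
      "base_y b i2 \<in> base_y b ` {..<4} \<inter> base_y b' ` {..<4}"
      using assms by (metis IntI image_eqI lessThan_iff)+
    then have "{base_y b i1, base_y b i2} \<subseteq> base_y b ` {..<4} \<inter> base_y b' ` {..<4}"
      by blast
    then have "card {base_y b i1, base_y b i2} \<le> card (base_y b ` {..<4} \<inter> base_y b' ` {..<4})"
      by (intro card_mono) auto
    then show False
      using distinct card_base_y_overlap[OF assms(1,2) \<open>b \<noteq> b'\<close>] by simp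
  qed
  moreover have "i1 = i1'" "i2 = i2'"
    using inj_onD[OF inj_on_base_y[OF assms(1)]] assms \<open>b = b'\<close> by simp_all
  ultimately show ?thesis
    by simp
qed

section \<open>The parallel classes\<close>

definition point_x :: "int \<Rightarrow> int \<Rightarrow> nat \<Rightarrow> nat \<Rightarrow> int \<Rightarrow> int" where
  "point_x a l b i h = base_shift a b i + base_sign b i * h + l * base_shear b i"

lemma point_x_row:
  "b < 3 \<Longrightarrow> point_x a l b i h = cell_shift a b i + (if i < 2 then a + h else 8 * a - h) + l * shear b i"
  by (simp add: point_x_def base_shift_def base_sign_def base_shear_def)

lemma point_x_col: "\<not> b < 3 \<Longrightarrow> i < 3 \<Longrightarrow>
    point_x a l b i h = cell_shift a i (b - 3) + (if i < 2 then a - 1 - h else h) + l * shear i (b - 3)"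
  by (simp add: point_x_def base_shift_def base_sign_def base_shear_def)

lemma point_x_zero: "\<not> b < 3 \<Longrightarrow> \<not> i < 3 \<Longrightarrow> point_x a l b i h = zero_shift a (b - 3) + h"
  by (simp add: point_x_def base_shift_def base_sign_def base_shear_def)

definition point :: "int \<Rightarrow> int \<Rightarrow> nat \<Rightarrow> nat \<Rightarrow> int \<Rightarrow> int" where
  "point a l b i h = zpair (modulus a) 25 (point_x a l b i h) (base_y b i)"

definition param_bound :: "int \<Rightarrow> nat \<Rightarrow> int" where
  "param_bound a b = (if b < 3 then 7 * a + 1 else a)"

definition block :: "int \<Rightarrow> int \<Rightarrow> nat \<Rightarrow> int \<Rightarrow> int set" where
  "block a l b h = (\<lambda>i. point a l b i h) ` {..<4}"

definition par_class :: "int \<Rightarrow> int \<Rightarrow> int set set" where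
  "par_class a l = {block a l b h | b h. b < 7 \<and> 0 \<le> h \<and> h < param_bound a b}"

definition zero_half :: "int \<Rightarrow> int set" where
  "zero_half a = {a + 1..3 * a} \<union> {4 * a + 1..5 * a} \<union> {7 * a + 1..8 * a}"

definition point_set :: "int \<Rightarrow> int set" where
  "point_set a = zprod_half (modulus a) 25 (zero_half a) harr_entries"

definition zero_col :: "int \<Rightarrow> int \<Rightarrow> nat" where
  "zero_col a x = (if x \<le> 2 * a then 0 else if x \<le> 3 * a then 1 else if x \<le> 5 * a then 2 else 3)"

text \<open>The inverse of \<open>(b, i, h) \<mapsto> point a l b i h\<close>: a point \<open>(x, y)\<close> with \<open>y = harr j t\<close>
  lies in row block \<open>j\<close> or column block \<open>3 + t\<close> according to whether the offset of \<open>x\<close>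
  from the shifted cell origin is at least \<open>a\<close>.\<close>

definition point_index :: "int \<Rightarrow> int \<Rightarrow> int \<Rightarrow> nat \<times> nat \<times> int" where
  "point_index a l u = (let y = u div modulus a; x = u mod modulus a in
     if y = 0 then (3 + zero_col a x, 3, x - zero_shift a (zero_col a x))
     else (let j = harr_row y; t = harr_col y;
               p = (x - cell_shift a j t - l * shear j t) mod modulus a in
       if p < a then (3 + t, j, if j < 2 then a - 1 - p else p)
       else (j, t, if t < 2 then p - a else 8 * a - p)))"

context
  fixes a :: int
  assumes a: "a \<ge> 1"
begin

lemma modulus_pos: "modulus a > 0"
  using a by (simp add: modulus_def)

lemma mod_half_set_zero_half: "mod_half_set (modulus a) (zero_half a)"
  using a unfolding mod_half_set_def zero_half_def modulus_def by auto

lemma zero_half_offset: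
  assumes "t < 4" "0 \<le> h" "h < a"
  shows "zero_col a (zero_shift a t + h) = t \<and> zero_shift a t + h \<in> zero_half a
    \<and> zero_shift a t + h \<in> {0..<modulus a}"
  using assms a unfolding less_4_cases
  by (elim disjE) (auto simp: zero_shift_def zero_col_def zero_half_def modulus_def)

lemma zero_half_decompose:
  assumes "x \<in> zero_half a"
  shows "zero_col a x < 4 \<and> 0 \<le> x - zero_shift a (zero_col a x) \<and> x - zero_shift a (zero_col a x) < a"
  using assms a by (auto simp: zero_shift_def zero_col_def zero_half_def)

lemma point_mod: "point a l b i h mod modulus a = point_x a l b i h mod modulus a"
  using modulus_pos by (simp add: point_def)

lemma point_div: "b < 7 \<Longrightarrow> i < 4 \<Longrightarrow> point a l b i h div modulus a = base_y b i"
  using modulus_pos base_y_range[of b i] by (simp add: point_def)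

lemma point_in_carrier: "point a l b i h \<in> {0..<modulus a * 25}"
  using modulus_pos by (simp add: point_def)

lemma point_in_point_set:
  assumes "b < 7" "i < 4" "0 \<le> h" "h < param_bound a b"
  shows "point a l b i h \<in> point_set a"
proof (cases "b < 3 \<or> i < 3")
  case True
  then have "base_y b i \<in> harr_entries"
    using assms harr_lookup[of b i] harr_lookup[of i "b - 3"] by (auto simp: base_y_def)
  then show ?thesis
    using assms point_in_carrier by (simp add: point_set_def zprod_half_def point_div)
next
  case False
  then have "zero_shift a (b - 3) + h \<in> zero_half a \<inter> {0..<modulus a}"
    using assms zero_half_offset[of "b - 3" h] by (simp add: param_bound_def)
  then show ?thesis
    using assms False point_in_carrier
    by (simp add: point_set_def zprod_half_def point_div point_mod point_x_zero base_y_zero)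
qed

lemma point_mod_diff:
  "(point a l b i h mod modulus a - c - d) mod modulus a = (point_x a l b i h - c - d) mod modulus a"
  by (metis point_mod mod_diff_left_eq diff_diff_eq)

lemma point_index_row:
  assumes "b < 3" "i < 4" "0 \<le> h" "h < 7 * a + 1"
  shows "point_index a l (point a l b i h) = (b, i, h)"
proof -
  define p where "p = (if i < 2 then a + h else 8 * a - h)"
  have p: "a \<le> p" "p < modulus a"
    using assms a by (auto simp: p_def modulus_def)
  have "(point a l b i h mod modulus a - cell_shift a b i - l * shear b i) mod modulus a = p mod modulus a"
    using assms by (simp add: point_mod_diff point_x_row p_def)
  also have "\<dots> = p"
    using p a by simp
  finally show ?thesis
    using assms p harr_lookup[of b i] zero_notin_harr_entries
    by (auto simp: point_index_def Let_def point_div base_y_row p_def)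
qed

lemma point_index_col:
  assumes "3 \<le> b" "b < 7" "i < 3" "0 \<le> h" "h < a"
  shows "point_index a l (point a l b i h) = (b, i, h)"
proof -
  define p where "p = (if i < 2 then a - 1 - h else h)"
  have p: "0 \<le> p" "p < a"
    using assms by (auto simp: p_def)
  then have "p < modulus a"
    by (simp add: modulus_def)
  have "b - 3 < 4"
    using assms by simp
  have "(point a l b i h mod modulus a - cell_shift a i (b - 3) - l * shear i (b - 3)) mod modulus a
      = p mod modulus a"
    using assms by (simp add: point_mod_diff point_x_col p_def)
  also have "\<dots> = p"
    using p \<open>p < modulus a\<close> by simp
  finally show ?thesis
    using assms p \<open>b - 3 < 4\<close> harr_lookup[of i "b - 3"] zero_notin_harr_entries
    by (auto simp: point_index_def Let_def point_div base_y_col p_def)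
qed

lemma point_index_zero:
  assumes "3 \<le> b" "b < 7" "0 \<le> h" "h < a"
  shows "point_index a l (point a l b 3 h) = (b, 3, h)"
proof -
  have "point a l b 3 h mod modulus a = zero_shift a (b - 3) + h"
    using assms zero_half_offset[of "b - 3" h] by (simp add: point_mod point_x_zero)
  then show ?thesis
    using assms zero_half_offset[of "b - 3" h]
    by (simp add: point_index_def Let_def point_div base_y_zero)
qed

lemma point_index_point:
  assumes "b < 7" "i < 4" "0 \<le> h" "h < param_bound a b"
  shows "point_index a l (point a l b i h) = (b, i, h)"
proof -
  consider "b < 3" | "3 \<le> b" "i < 3" | "3 \<le> b" "i = 3"
    using assms by linarith
  then show ?thesis
    using assms point_index_row point_index_col point_index_zero
    by cases (auto simp: param_bound_def)
qed

lemma zpair_point_set: "u \<in> point_set a \<Longrightarrow> zpair (modulus a) 25 (u mod modulus a) (u div modulus a) = u"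
  using modulus_pos zpair_mod_div[of "modulus a" 25 u] by (simp add: point_set_def zprod_half_def)

lemma point_point_index_zero:
  assumes u: "u \<in> point_set a" "u div modulus a = 0" and idx: "point_index a l u = (b, i, h)"
  shows "b < 7 \<and> i < 4 \<and> 0 \<le> h \<and> h < param_bound a b \<and> point a l b i h = u"
proof -
  define x where "x = u mod modulus a"
  define t where "t = zero_col a x"
  have "x \<in> zero_half a"
    using u zero_notin_harr_entries by (simp add: point_set_def zprod_half_def x_def)
  then have t: "t < 4" "0 \<le> x - zero_shift a t" "x - zero_shift a t < a"
    using zero_half_decompose by (simp_all add: t_def)
  have bih: "b = 3 + t" "i = 3" "h = x - zero_shift a t"
    using idx u by (simp_all add: point_index_def Let_def x_def t_def)
  have "point a l b i h = zpair (modulus a) 25 x 0"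
    using bih by (simp add: point_def point_x_zero base_y_zero)
  also have "\<dots> = u"
    using zpair_point_set[OF u(1)] u(2) by (simp add: x_def)
  finally show ?thesis
    using t bih by (simp add: param_bound_def)
qed

lemma point_point_index_cell:
  assumes u: "u \<in> point_set a" "u div modulus a \<noteq> 0" and idx: "point_index a l u = (b, i, h)"
  shows "b < 7 \<and> i < 4 \<and> 0 \<le> h \<and> h < param_bound a b \<and> point a l b i h = u"
proof -
  define y where "y = u div modulus a"
  define j where "j = harr_row y"
  define t where "t = harr_col y"
  define p where "p = (u mod modulus a - cell_shift a j t - l * shear j t) mod modulus a"
  have "y \<in> harr_entries"
    using u by (simp add: point_set_def zprod_half_def y_def)
  then have cell: "j < 3" "t < 4" "harr j t = y"
    using harr_entries_lookup by (simp_all add: j_def t_def)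
  have p: "0 \<le> p" "p < modulus a"
    using modulus_pos by (simp_all add: p_def)
  have "u = zpair (modulus a) 25 (u mod modulus a) y"
    using zpair_point_set[OF u(1)] by (simp add: y_def)
  also have "\<dots> = zpair (modulus a) 25 (cell_shift a j t + p + l * shear j t) y"
    unfolding p_def by (intro zpair_cong) (simp_all only: mod_shift_offset)
  finally have u_eq: "u = zpair (modulus a) 25 (cell_shift a j t + p + l * shear j t) y" .
  have idx_eq: "point_index a l u = (if p < a then (3 + t, j, if j < 2 then a - 1 - p else p)
      else (j, t, if t < 2 then p - a else 8 * a - p))"
    using u(2) unfolding point_index_def Let_def
    by (simp add: y_def[symmetric] j_def[symmetric] t_def[symmetric] p_def[symmetric])
  show ?thesis
  proof (cases "p < a")
    case True
    then have bih: "b = 3 + t" "i = j" "h = (if j < 2 then a - 1 - p else p)"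
      using idx idx_eq by auto
    then have "point a l b i h = u"
      using cell u_eq by (simp add: point_def point_x_col base_y_col)
    then show ?thesis
      using bih cell p True by (auto simp: param_bound_def)
  next
    case False
    then have bih: "b = j" "i = t" "h = (if t < 2 then p - a else 8 * a - p)"
      using idx idx_eq by auto
    then have "point a l b i h = u"
      using cell u_eq by (simp add: point_def point_x_row base_y_row)
    then show ?thesis
      using bih cell p False by (auto simp: param_bound_def modulus_def)
  qed
qed

lemma point_point_index:
  "u \<in> point_set a \<Longrightarrow> point_index a l u = (b, i, h) \<Longrightarrow>
     b < 7 \<and> i < 4 \<and> 0 \<le> h \<and> h < param_bound a b \<and> point a l b i h = u"
  using point_point_index_zero point_point_index_cell by blast

lemma point_inj:
  assumes "b < 7" "i < 4" "0 \<le> h" "h < param_bound a b"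
    and "b' < 7" "i' < 4" "0 \<le> h'" "h' < param_bound a b'"
    and "point a l b i h = point a l b' i' h'"
  shows "b = b' \<and> i = i' \<and> h = h'"
proof -
  have "(b, i, h) = point_index a l (point a l b i h)"
    using point_index_point[OF assms(1-4)] by simp
  also have "\<dots> = (b', i', h')"
    using point_index_point[OF assms(5-8)] assms(9) by simp
  finally show ?thesis
    by simp
qed

lemma block_subset:
  assumes "b < 7" "0 \<le> h" "h < param_bound a b"
  shows "block a l b h \<subseteq> point_set a"
  unfolding block_def using point_in_point_set[of b _ h l] assms by auto

lemma inj_on_block_points:
  assumes "b < 7" "0 \<le> h" "h < param_bound a b"
  shows "inj_on (\<lambda>i. point a l b i h) {..<4}"
proof (rule inj_onI)
  fix i i'
  assume "i \<in> {..<4}" "i' \<in> {..<4}" "point a l b i h = point a l b i' h"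
  then show "i = i'"
    using point_inj[of b i h b i' h l] assms by simp
qed

lemma card_block: "b < 7 \<Longrightarrow> 0 \<le> h \<Longrightarrow> h < param_bound a b \<Longrightarrow> card (block a l b h) = 4"
  by (simp add: block_def card_image inj_on_block_points)

lemma block_sum_zero:
  assumes b: "b < 7" and h: "0 \<le> h" "h < param_bound a b"
  shows "finprod (zprod (modulus a) 25) id (block a l b h) = \<one>\<^bsub>zprod (modulus a) 25\<^esub>"
proof -
  let ?q = "modulus a"
  have inj: "inj_on (\<lambda>i. point a l b i h) {..<4}"
    using inj_on_block_points[OF b h] .
  have "block a l b h \<subseteq> {0..<?q * 25}"
    using point_in_carrier by (auto simp: block_def)
  then have "finprod (zprod ?q 25) id (block a l b h)
      = zpair ?q 25 (\<Sum>i<4. point_x a l b i h mod ?q) (\<Sum>i<4. base_y b i)"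
    using modulus_pos b zprod_finprod[of ?q 25 "block a l b h"]
    by (simp add: block_def sum.reindex[OF inj] point_mod point_div)
  also have "\<dots> = zpair ?q 25 0 0"
  proof (rule zpair_cong)
    have "(\<Sum>i<4. point_x a l b i h mod ?q) mod ?q = (\<Sum>i<4. point_x a l b i h) mod ?q"
      by (rule mod_sum_eq)
    also have "(\<Sum>i<4. point_x a l b i h)
        = (\<Sum>i<4. base_shift a b i) + h * (\<Sum>i<4. base_sign b i) + l * (\<Sum>i<4. base_shear b i)"
      by (simp add: point_x_def sum.distrib sum_distrib_left mult.commute)
    finally show "(\<Sum>i<4. point_x a l b i h mod ?q) mod ?q = 0 mod ?q"
      using base_shift_sum[OF b] base_sign_sum[OF b] base_shear_sum[OF b] by simp
    show "(\<Sum>i<4. base_y b i) mod 25 = 0 mod 25"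
      using base_y_sum[OF b] by simp
  qed
  finally show ?thesis
    by (simp add: zpair_def)
qed

lemma Union_par_class: "\<Union>(par_class a l) = point_set a"
proof
  show "\<Union>(par_class a l) \<subseteq> point_set a"
    using block_subset by (auto simp: par_class_def)
  show "point_set a \<subseteq> \<Union>(par_class a l)"
  proof
    fix u
    assume u: "u \<in> point_set a"
    obtain b i h where idx: "point_index a l u = (b, i, h)"
      by (metis prod_cases3)
    then have "b < 7" "i < 4" "0 \<le> h" "h < param_bound a b" "point a l b i h = u"
      using point_point_index[OF u] by simp_all
    then have "u \<in> block a l b h" "block a l b h \<in> par_class a l"
      unfolding block_def par_class_def by (force, blast)
    then show "u \<in> \<Union>(par_class a l)"
      by blast
  qed
qed

lemma par_class_disjoint:
  assumes "B \<in> par_class a l" "B' \<in> par_class a l" "B \<inter> B' \<noteq> {}"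
  shows "B = B'"
proof -
  obtain b h b' h' where B: "B = block a l b h" "b < 7" "0 \<le> h" "h < param_bound a b"
    and B': "B' = block a l b' h'" "b' < 7" "0 \<le> h'" "h' < param_bound a b'"
    using assms(1,2) by (auto simp: par_class_def)
  obtain i i' where i: "i < 4" "i' < 4" and same: "point a l b i h = point a l b' i' h'"
    using assms(3) B(1) B'(1) by (auto simp: block_def)
  have "b = b' \<and> i = i' \<and> h = h'"
    using point_inj[OF B(2) i(1) B(3,4) B'(2) i(2) B'(3,4) same] .
  then show ?thesis
    using B(1) B'(1) by simp
qed

lemma par_class_heffter_system:
  "heffter_system (zprod (modulus a) 25) (point_set a) 4 (par_class a l)"
  unfolding heffter_system_def
proof (intro conjI ballI impI)
  show "\<Union>(par_class a l) = point_set a"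
    by (rule Union_par_class)
next
  fix B B'
  assume "B \<in> par_class a l" "B' \<in> par_class a l" "B \<noteq> B'"
  then show "B \<inter> B' = {}"
    using par_class_disjoint by blast
next
  fix B
  assume "B \<in> par_class a l"
  then obtain b h where "B = block a l b h" "b < 7" "0 \<le> h" "h < param_bound a b"
    by (auto simp: par_class_def)
  then show "card B = 4" "finprod (zprod (modulus a) 25) id B = \<one>\<^bsub>zprod (modulus a) 25\<^esub>"
    by (simp_all add: card_block block_sum_zero)
qed

lemma point_eq_dvd:
  assumes "point a l b i h = point a l' b i h'"
  shows "modulus a dvd base_sign b i * (h - h') + (l - l') * base_shear b i"
proof -
  have "point_x a l b i h mod modulus a = point_x a l' b i h' mod modulus a"
    using arg_cong[OF assms, of "\<lambda>x. x mod modulus a"] by (simp only: point_mod)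
  then have "modulus a dvd point_x a l b i h - point_x a l' b i h'"
    by (simp only: mod_eq_dvd_iff)
  also have "point_x a l b i h - point_x a l' b i h' = base_sign b i * (h - h') + (l - l') * base_shear b i"
    by (simp add: point_x_def algebra_simps)
  finally show ?thesis .
qed

lemma shared_points_same_class:
  assumes B: "b < 7" "0 \<le> h" "h < param_bound a b" and B': "b' < 7" "0 \<le> h'" "h' < param_bound a b'"
    and slots: "i1 < 4" "i2 < 4" "i1' < 4" "i2' < 4" "i1 \<noteq> i2"
    and u: "point a l b i1 h = point a l' b' i1' h'" and v: "point a l b i2 h = point a l' b' i2' h'"
    and close: "\<bar>l - l'\<bar> < a"
  shows "l = l'"
proof (rule ccontr)
  assume "l \<noteq> l'"
  let ?q = "modulus a"
  let ?slope = "\<lambda>i. base_sign b i * base_shear b i"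
  have "base_y b i1 = base_y b' i1'" "base_y b i2 = base_y b' i2'"
    using arg_cong[OF u, of "\<lambda>x. x div ?q"] arg_cong[OF v, of "\<lambda>x. x div ?q"] B B' slots
    by (simp_all add: point_div)
  then have "b' = b" "i1' = i1" "i2' = i2"
    using base_y_crossing[OF B(1) B'(1) slots] by simp_all
  then have u': "point a l b i1 h = point a l' b i1 h'" and v': "point a l b i2 h = point a l' b i2 h'"
    using u v by simp_all
  have "?q dvd (l - l') * (?slope i1 - ?slope i2)"
    using shear_collision[OF base_sign_square base_sign_square point_eq_dvd[OF u'] point_eq_dvd[OF v']] .
  moreover have "(l - l') * (?slope i1 - ?slope i2) \<noteq> 0"
    using \<open>l \<noteq> l'\<close> base_slope_distinct[OF B(1) slots(1,2,5)] by simp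
  moreover have "\<bar>?slope i1 - ?slope i2\<bar> \<le> 6"
    using base_slope_bound[OF B(1) slots(1)] base_slope_bound[OF B(1) slots(2)] by linarith
  then have "\<bar>(l - l') * (?slope i1 - ?slope i2)\<bar> \<le> \<bar>l - l'\<bar> * 6"
    by (simp add: abs_mult mult_left_mono)
  then have "\<bar>(l - l') * (?slope i1 - ?slope i2)\<bar> < ?q"
    using close a by (simp add: modulus_def)
  ultimately show False
    using dvd_imp_le_int[of "(l - l') * (?slope i1 - ?slope i2)" ?q] modulus_pos by linarith
qed

lemma par_class_orthogonal:
  assumes "B \<in> par_class a l" "B' \<in> par_class a l'" "\<bar>l - l'\<bar> < a" "l \<noteq> l'"
  shows "card (B \<inter> B') \<le> 1"
proof -
  obtain b h b' h' where B: "B = block a l b h" "b < 7" "0 \<le> h" "h < param_bound a b"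
    and B': "B' = block a l' b' h'" "b' < 7" "0 \<le> h'" "h' < param_bound a b'"
    using assms(1,2) by (auto simp: par_class_def)
  have "u = v" if uv: "u \<in> B \<inter> B'" "v \<in> B \<inter> B'" for u v
  proof (rule ccontr)
    assume "u \<noteq> v"
    obtain i1 i2 where i: "i1 < 4" "i2 < 4" and "u = point a l b i1 h" "v = point a l b i2 h"
      using uv B(1) by (auto simp: block_def)
    moreover obtain i1' i2' where i': "i1' < 4" "i2' < 4"
      and "u = point a l' b' i1' h'" "v = point a l' b' i2' h'"
      using uv B'(1) by (auto simp: block_def)
    ultimately have "i1 \<noteq> i2" "point a l b i1 h = point a l' b' i1' h'"
      "point a l b i2 h = point a l' b' i2' h'"
      using \<open>u \<noteq> v\<close> by auto
    then have "l = l'"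
      using shared_points_same_class[OF B(2-4) B'(2-4) i i'] assms(3) by blast
    with assms(4) show False ..
  qed
  moreover have "finite (B \<inter> B')"
    using B(1) by (simp add: block_def)
  ultimately have "card (B \<inter> B') \<le> Suc 0"
    using card_le_Suc0_iff_eq by blast
  then show ?thesis
    by simp
qed

lemma heffter_space_par_classes:
  assumes "int n \<le> a"
  shows "heffter_space (zprod (modulus a) 25) (point_set a) 4 n (\<lambda>k. par_class a (int k))"
  unfolding heffter_space_def
proof (intro conjI allI impI ballI)
  show "half_set (zprod (modulus a) 25) (point_set a)"
    unfolding point_set_def
    using half_set_zprod_half modulus_pos mod_half_set_zero_half mod_half_set_harr_entries by simp
  show "heffter_system (zprod (modulus a) 25) (point_set a) 4 (par_class a (int k))" for k
    by (rule par_class_heffter_system)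
  fix k k' B B'
  assume k: "k < n" "k' < n" and B: "B \<in> par_class a (int k)" "B' \<in> par_class a (int k')"
    and distinct: "(k, B) \<noteq> (k', B')"
  show "card (B \<inter> B') \<le> 1"
  proof (cases "k = k'")
    case True
    then have "B \<inter> B' = {}"
      using par_class_disjoint B distinct by blast
    then show ?thesis
      by simp
  next
    case False
    then show ?thesis
      using par_class_orthogonal B k assms by simp
  qed
qed

end

theorem mainTheorem12:
  fixes r :: nat
  assumes "r \<ge> 1"
  shows "\<exists>(G :: int monoid) V k P.
           comm_group G \<and> finite (carrier G) \<and> odd (card (carrier G)) \<and>
           card (carrier G) \<ge> 7 \<and> heffter_space G V k r P"
proof -
  define a where "a = int r"
  have a: "a \<ge> 1"
    using assms by (simp add: a_def)
  have card: "card (carrier (zprod (modulus a) 25)) = nat (200 * a + 25)"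
    by (simp add: modulus_def algebra_simps)
  have "comm_group (zprod (modulus a) 25)"
    using zprod_comm_group modulus_pos[OF a] by simp
  moreover have "odd (card (carrier (zprod (modulus a) 25)))" "card (carrier (zprod (modulus a) 25)) \<ge> 7"
    using a unfolding card by (simp_all add: even_nat_iff)
  moreover have "heffter_space (zprod (modulus a) 25) (point_set a) 4 r (\<lambda>k. par_class a (int k))"
    using heffter_space_par_classes[OF a] by (simp add: a_def)
  ultimately show ?thesis
    by fastforce
qed

end
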